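(* Let $M\in\mathbb{R}^{p\times q}$ have rank $k\ge1$. Then there exist $A\in\mathbb{R}^{k\times p}$ and $B\in\mathbb{R}^{k\times q}$ with $M=A^TB$ such that every column of $A$ and every column of $B$ has Euclidean norm at most $k^{1/4}\sqrt{\|M\|_\infty}$.
   Context: $\|M\|_\infty$ denotes the maximum absolute value of an entry of $M$. *)

theory Defs
  imports "HOL-Analysis.Analysis"
begin

definition max_entry_norm :: "real^'q^'p \<Rightarrow> real" where
  "max_entry_norm M = Max (range (\<lambda>(i,j). \<bar>M $ i $ j\<bar>))"

end

theory Submission
  imports Defs
begin

text \<open>
  Idea: start from any factorization \<open>M i j = c i \<bullet> d j\<close> through \<open>\<real>^k\<close>; the \<open>c i\<close> span
  \<open>\<real>^k\<close>.  Apply the linear map \<open>T\<close> of maximal \<open>|det T|\<close> among those sending every \<open>c i\<close>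
  into the unit ball (it exists by compactness), and compensate on the right by the inverse transpose of \<open>T\<close>.
  The new left vectors \<open>a i = T c i\<close> are in "minimal ellipsoid position" (John's
  position): by maximality of the determinant, for every unit vector \<open>u\<close> some \<open>a i\<close> has
  \<open>(a i \<bullet> u)\<^sup>2 \<ge> 1/k\<close>, since otherwise a small stretch in direction \<open>u\<close> would increase the
  volume.  Applied to \<open>u = b j / norm (b j)\<close> this gives \<open>norm (b j) \<le> sqrt k * \<parallel>M\<parallel>\<^sub>\<infinity>\<close>
  while \<open>norm (a i) \<le> 1\<close>; rescaling both sides balances the bounds.
\<close>

definition diag_mat :: "('n::finite \<Rightarrow> real) \<Rightarrow> real^'n^'n" where
  "diag_mat d = (\<chi> r s. if r = s then d r else 0)"

lemma diag_mat_mult_vec: "diag_mat d *v x = (\<chi> r. d r * x $ r)"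
proof -
  have "\<And>r s. (if r = s then d r else 0) * x $ s = (if r = s then d r * x $ r else 0)" by simp
  then show ?thesis by (simp add: diag_mat_def matrix_vector_mult_def vec_eq_iff)
qed

lemma det_diag_mat: "det (diag_mat d) = prod d UNIV"
  unfolding diag_mat_def by (subst det_diagonal) auto

lemma norm_sq_eq_sum: "(norm (x :: real^'n))^2 = (\<Sum>r\<in>UNIV. (x $ r)^2)"
  by (simp add: norm_vec_def L2_set_def sum_nonneg)

text \<open>Elementary inequality behind the volume argument: if \<open>L > n - 1\<close>, then for some
  small \<open>e > 0\<close> the product \<open>(1 + e L) (1 - e)^(n-1)\<close> exceeds 1.  The witness is
  \<open>e = (L - (n - 1)) / (2 n L)\<close>, and Bernoulli's inequality bounds the second factor.\<close>

lemma stretch_gain: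
  fixes n :: nat and L :: real
  assumes n: "n \<ge> 1" and L: "L > real n - 1"
  shows "\<exists>e. 0 < e \<and> e \<le> 1/2 \<and> (1 + e * L) * (1 - e) ^ (n - 1) > 1"
proof -
  define D where "D = L - (real n - 1)"
  have D: "D > 0" and DL: "D \<le> L" using n L by (auto simp: D_def)
  define e where "e = D / (2 * n * L)"
  have e: "e > 0" using D DL n by (simp add: e_def)
  have "e \<le> L / (2 * n * L)" unfolding e_def using DL D n by (intro divide_right_mono) auto
  also have "\<dots> \<le> 1/2" using D DL n by (simp add: field_simps)
  finally have e_half: "e \<le> 1/2" .
  have "1 + real (n - 1) * (-e) \<le> (1 + (-e)) ^ (n - 1)"
    using e_half by (intro Bernoulli_inequality) simp
  hence bern: "1 - (real n - 1) * e \<le> (1 - e) ^ (n - 1)" using n by simp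
  have "(1 + e * L) * (1 - (real n - 1) * e) = 1 + e * D - e * ((real n - 1) * D / (2 * n))"
    using D DL n by (simp add: D_def e_def field_simps)
  moreover have "e * ((real n - 1) * D / (2 * n)) \<le> e * (D / 2)"
    using D e n by (intro mult_left_mono) (auto simp: field_simps)
  ultimately have "(1 + e * L) * (1 - (real n - 1) * e) > 1" using mult_pos_pos[OF e D] by linarith
  also have "(1 + e * L) * (1 - (real n - 1) * e) \<le> (1 + e * L) * (1 - e) ^ (n - 1)"
    using bern e D DL by (intro mult_left_mono) auto
  finally show ?thesis using e e_half by blast
qed

lemma stretch_along_axis:
  fixes x :: "real^'n::finite" and k0 :: 'n
  assumes e: "0 \<le> e" "e \<le> 1" and eL: "0 \<le> 1 + e * L"
  defines "S \<equiv> diag_mat (\<lambda>r. if r = k0 then sqrt (1 + e * L) else sqrt (1 - e))"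
  shows "(norm (S *v x))^2 = (1 - e) * (norm x)^2 + e * (1 + L) * (x $ k0)^2"
    and "(det S)^2 = (1 + e * L) * (1 - e) ^ (CARD('n) - 1)"
proof -
  have "(norm (S *v x))^2
      = (\<Sum>r\<in>UNIV. (1 - e) * (x $ r)^2 + (if r = k0 then e * (1 + L) * (x $ r)^2 else 0))"
    unfolding S_def diag_mat_mult_vec norm_sq_eq_sum
    using e eL by (intro sum.cong) (auto simp: power_mult_distrib algebra_simps)
  also have "\<dots> = (1 - e) * (norm x)^2 + e * (1 + L) * (x $ k0)^2"
    by (simp add: sum.distrib sum_distrib_left norm_sq_eq_sum)
  finally show "(norm (S *v x))^2 = (1 - e) * (norm x)^2 + e * (1 + L) * (x $ k0)^2" .
  have "det S = sqrt (1 + e * L) * sqrt (1 - e) ^ (CARD('n) - 1)"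
    unfolding S_def det_diag_mat
    by (simp add: prod.remove[of UNIV k0] card_Diff_singleton)
  then show "(det S)^2 = (1 + e * L) * (1 - e) ^ (CARD('n) - 1)"
    using e eL by (simp add: power_mult_distrib flip: power_mult) (simp add: power_mult mult.commute)
qed

text \<open>A family of points \<open>a\<close> is in minimal ellipsoid position if it lies in the closed unit
  ball and no linear map \<open>S\<close> that keeps all points in the unit ball has \<open>|det S| > 1\<close>;
  equivalently, no centred ellipsoid of smaller volume than the unit ball contains the points.\<close>

definition min_ellipsoid_position :: "('i \<Rightarrow> real^'n::finite) \<Rightarrow> bool" where
  "min_ellipsoid_position a \<longleftrightarrow> (\<forall>i. norm (a i) \<le> 1) \<and>
     (\<forall>S::real^'n^'n. (\<forall>i. norm (S *v a i) \<le> 1) \<longrightarrow> \<bar>det S\<bar> \<le> 1)"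

text \<open>Otherwise a slight stretch along that
  axis would keep all points in the ball while increasing the determinant.\<close>

lemma min_ellipsoid_position_axis:
  fixes a :: "'i::finite \<Rightarrow> real^'n::finite"
  assumes pos: "min_ellipsoid_position a"
  shows "\<exists>i. (a i $ k0)^2 \<ge> 1 / CARD('n)"
proof (rule ccontr)
  assume "\<not> ?thesis"
  hence small: "(a i $ k0)^2 < 1 / CARD('n)" for i by (meson not_le)
  define n where "n = CARD('n)"
  have n: "n \<ge> 1" unfolding n_def by (simp add: Suc_le_eq)
  define \<delta> where "\<delta> = max (Max (range (\<lambda>i. (a i $ k0)^2))) (1 / (2 * n))"
  have "Max (range (\<lambda>i. (a i $ k0)^2)) < 1 / n"
    using Max_in[of "range (\<lambda>i. (a i $ k0)^2)"] small by (auto simp: n_def)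
  moreover have "0 < 1 / (2 * n)" "1 / (2 * n) < 1 / n" using n by (auto simp: field_simps)
  ultimately have \<delta>: "0 < \<delta>" "\<delta> < 1 / n" unfolding \<delta>_def by auto
  have below_\<delta>: "(a i $ k0)^2 \<le> \<delta>" for i unfolding \<delta>_def by (intro max.coboundedI1 Max_ge) auto
  define L where "L = 1 / \<delta> - 1"
  have "L > real n - 1" using \<delta> n by (simp add: L_def field_simps)
  then obtain e where e: "0 < e" "e \<le> 1/2" and gain: "(1 + e * L) * (1 - e) ^ (n - 1) > 1"
    using stretch_gain n by blast
  have eL: "0 \<le> 1 + e * L" using \<open>L > real n - 1\<close> n e by simp
  define S :: "real^'n^'n" where "S = diag_mat (\<lambda>r. if r = k0 then sqrt (1 + e * L) else sqrt (1 - e))"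
  have "norm (S *v a i) \<le> 1" for i
  proof -
    have "(norm (S *v a i))^2 = (1 - e) * (norm (a i))^2 + e * (1 + L) * (a i $ k0)^2"
      unfolding S_def using e eL by (intro stretch_along_axis) auto
    also have "\<dots> \<le> (1 - e) * 1 + e * (1 + L) * \<delta>"
    proof (intro add_mono mult_left_mono)
      show "(norm (a i))^2 \<le> 1" using pos by (simp add: min_ellipsoid_position_def power_le_one)
    qed (use e \<delta> below_\<delta> eL in \<open>auto simp: L_def\<close>)
    also have "\<dots> = 1" using \<delta> by (simp add: L_def field_simps)
    finally show ?thesis by (simp add: power_le_one_iff)
  qed
  hence "\<bar>det S\<bar> \<le> 1" using pos by (simp add: min_ellipsoid_position_def)
  hence "(det S)^2 \<le> 1" by (simp add: abs_square_le_1)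
  moreover have "(det S)^2 = (1 + e * L) * (1 - e) ^ (n - 1)"
    unfolding S_def n_def using e eL by (intro stretch_along_axis) auto
  ultimately show False using gain by simp
qed

lemma min_ellipsoid_position_orthogonal:
  fixes a :: "'i \<Rightarrow> real^'n::finite" and f :: "real^'n \<Rightarrow> real^'n"
  assumes pos: "min_ellipsoid_position a" and f: "orthogonal_transformation f"
  shows "min_ellipsoid_position (\<lambda>i. f (a i))"
  unfolding min_ellipsoid_position_def
proof (intro conjI allI impI)
  fix i show "norm (f (a i)) \<le> 1"
    using pos f by (simp add: min_ellipsoid_position_def orthogonal_transformation_norm)
next
  fix S :: "real^'n^'n" assume S: "\<forall>i. norm (S *v f (a i)) \<le> 1"
  have Rf: "matrix f *v x = f x" for x
    using matrix_vector_mul(2)[OF orthogonal_transformation_linear[OF f]] by (rule fun_cong)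
  have "\<bar>det (S ** matrix f)\<bar> \<le> 1"
    using pos S by (simp add: min_ellipsoid_position_def matrix_vector_mul_assoc[symmetric] Rf)
  thus "\<bar>det S\<bar> \<le> 1" by (simp add: det_mul abs_mult orthogonal_transformation_det[OF f])
qed

text \<open>Rotating the unit vector \<open>u\<close> onto a coordinate axis: points in minimal ellipsoid
  position come close to every direction.\<close>

lemma min_ellipsoid_position_contact:
  fixes a :: "'i::finite \<Rightarrow> real^'n::finite"
  assumes pos: "min_ellipsoid_position a" and u: "norm u = 1"
  shows "\<exists>i. (a i \<bullet> u)^2 \<ge> 1 / CARD('n)"
proof -
  fix k0 :: 'n \<comment> \<open>any coordinate axis will do\<close>
  obtain f :: "real^'n \<Rightarrow> real^'n" where f: "orthogonal_transformation f" "f u = axis k0 1"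
    using orthogonal_transformation_exists[of u "axis k0 (1::real)"] u by auto
  have coord: "f (a i) $ k0 = a i \<bullet> u" for i
    using f by (metis cart_eq_inner_axis orthogonal_transformation_def)
  show ?thesis
    using min_ellipsoid_position_axis[OF min_ellipsoid_position_orthogonal[OF pos f(1)], of k0]
    by (simp add: coord)
qed

lemma min_ellipsoid_position_norm_bound:
  fixes a :: "'i::finite \<Rightarrow> real^'n::finite"
  assumes pos: "min_ellipsoid_position a"
  shows "\<exists>i. norm w \<le> sqrt (CARD('n)) * \<bar>a i \<bullet> w\<bar>"
proof (cases "w = 0")
  case False
  define u where "u = w /\<^sub>R norm w"
  have "norm u = 1" using False by (simp add: u_def)
  then obtain i where i: "(a i \<bullet> u)^2 \<ge> 1 / CARD('n)"
    using min_ellipsoid_position_contact[OF pos] by blast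
  have "(a i \<bullet> u)^2 = (a i \<bullet> w)^2 / (norm w)^2"
    by (simp add: u_def power_mult_distrib field_simps)
  with i False have "(norm w)^2 \<le> CARD('n) * (a i \<bullet> w)^2"
    by (simp add: field_simps)
  hence "sqrt ((norm w)^2) \<le> sqrt (CARD('n)) * sqrt ((a i \<bullet> w)^2)"
    by (metis real_sqrt_le_mono real_sqrt_mult)
  thus ?thesis by auto
qed auto

text \<open>If the points \<open>c i\<close> span the space, the matrices mapping them all into the unit ball
  form a bounded set: each basis vector is a fixed combination of the \<open>c i\<close>.\<close>

lemma bounded_spanning_contractions:
  fixes c :: "'i::finite \<Rightarrow> real^'n::finite"
  assumes span: "span (range c) = UNIV"
  shows "bounded {T :: real^'n^'m::finite. \<forall>i. norm (T *v c i) \<le> 1}" (is "bounded ?F")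
proof -
  have "\<exists>u. axis s 1 = (\<Sum>v\<in>range c. u v *\<^sub>R v)" for s :: 'n
  proof -
    have "axis s 1 \<in> range (\<lambda>u. \<Sum>v\<in>range c. u v *\<^sub>R v)"
      using span span_finite[of "range c"] by simp
    thus ?thesis by blast
  qed
  then obtain u where u: "\<And>s. axis s 1 = (\<Sum>v\<in>range c. u s v *\<^sub>R v)" by metis
  have entry: "\<bar>T $ r $ s\<bar> \<le> (\<Sum>v\<in>range c. \<bar>u s v\<bar>)" if T: "T \<in> ?F" for T r s
  proof -
    have "\<bar>T $ r $ s\<bar> = \<bar>(T *v axis s 1) $ r\<bar>" by (simp add: matrix_vector_mult_basis column_def)
    also have "\<dots> \<le> norm (T *v axis s 1)" by (rule component_le_norm_cart)
    also have "T *v axis s 1 = (\<Sum>v\<in>range c. u s v *\<^sub>R (T *v v))"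
      unfolding u by (simp add: linear_sum[OF matrix_vector_mul_linear] matrix_vector_mult_scaleR)
    also have "norm \<dots> \<le> (\<Sum>v\<in>range c. \<bar>u s v\<bar> * norm (T *v v))"
      by (rule norm_sum[THEN order_trans]) simp
    also have "\<dots> \<le> (\<Sum>v\<in>range c. \<bar>u s v\<bar>)"
      using T by (intro sum_mono) (auto simp: mult_left_le)
    finally show ?thesis .
  qed
  show ?thesis unfolding bounded_iff
  proof (intro exI ballI)
    fix T assume T: "T \<in> ?F"
    have "norm T \<le> (\<Sum>r\<in>UNIV. norm (T $ r))" unfolding norm_vec_def by (rule L2_set_le_sum) simp
    also have "\<dots> \<le> (\<Sum>r\<in>UNIV. \<Sum>s\<in>UNIV. \<bar>T $ r $ s\<bar>)" by (intro sum_mono norm_le_l1_cart)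
    also have "\<dots> \<le> (\<Sum>r\<in>(UNIV::'m set). \<Sum>s\<in>UNIV. \<Sum>v\<in>range c. \<bar>u s v\<bar>)"
      by (intro sum_mono entry[OF T])
    finally show "norm T \<le> (\<Sum>r\<in>(UNIV::'m set). \<Sum>s\<in>UNIV. \<Sum>v\<in>range c. \<bar>u s v\<bar>)" .
  qed
qed

lemma compact_spanning_contractions:
  fixes c :: "'i::finite \<Rightarrow> real^'n::finite"
  assumes span: "span (range c) = UNIV"
  shows "compact {T :: real^'n^'m::finite. \<forall>i. norm (T *v c i) \<le> 1}" (is "compact ?F")
proof -
  have "closed {T :: real^'n^'m. norm (T *v c i) \<le> 1}" for i
    unfolding matrix_vector_mult_def by (intro closed_Collect_le continuous_intros)
  moreover have "?F = (\<Inter>i. {T. norm (T *v c i) \<le> 1})" by auto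
  ultimately have "closed ?F" by auto
  thus ?thesis using bounded_spanning_contractions[OF span] by (simp add: compact_eq_bounded_closed)
qed

text \<open>Every spanning family can be brought into minimal ellipsoid position by an invertible
  linear map: take a matrix of maximal \<open>|det|\<close> in the compact set above.\<close>

lemma min_ellipsoid_position_exists:
  fixes c :: "'i::finite \<Rightarrow> real^'n::finite"
  assumes span: "span (range c) = UNIV"
  shows "\<exists>T :: real^'n^'n. invertible T \<and> min_ellipsoid_position (\<lambda>i. T *v c i)"
proof -
  define F where "F = {T :: real^'n^'n. \<forall>i. norm (T *v c i) \<le> 1}"
  define t where "t = 1 / (1 + (\<Sum>i\<in>UNIV. norm (c i)))"
  have t: "t > 0" unfolding t_def by (simp add: add_pos_nonneg sum_nonneg)
  have scaled: "matrix ((*\<^sub>R) t) *v x = t *\<^sub>R x" for x :: "real^'n"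
    by (simp add: matrix_works linear_scaleR)
  have scaled_in_F: "matrix ((*\<^sub>R) t) \<in> F"
  proof -
    have "t * norm (c i) \<le> 1" for i
    proof -
      have "norm (c i) \<le> (\<Sum>i\<in>UNIV. norm (c i))" by (rule member_le_sum) auto
      thus ?thesis unfolding t_def by (simp add: divide_le_eq add_pos_nonneg sum_nonneg)
    qed
    thus ?thesis using t by (simp add: F_def scaled)
  qed
  have "compact F" unfolding F_def using span by (rule compact_spanning_contractions)
  moreover have "continuous_on F (\<lambda>T. \<bar>det T\<bar>)" unfolding det_def by (intro continuous_intros)
  moreover have "F \<noteq> {}" using scaled_in_F by blast
  ultimately obtain T0 where T0: "T0 \<in> F" and T0_max: "\<And>T. T \<in> F \<Longrightarrow> \<bar>det T\<bar> \<le> \<bar>det T0\<bar>"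
    by (meson continuous_attains_sup)
  have "0 < \<bar>det (matrix ((*\<^sub>R) t) :: real^'n^'n)\<bar>" using t by simp
  hence det_T0: "\<bar>det T0\<bar> > 0" using T0_max[OF scaled_in_F] by linarith
  have "min_ellipsoid_position (\<lambda>i. T0 *v c i)"
    unfolding min_ellipsoid_position_def
  proof (intro conjI allI impI)
    show "norm (T0 *v c i) \<le> 1" for i using T0 by (simp add: F_def)
    fix S :: "real^'n^'n" assume "\<forall>i. norm (S *v (T0 *v c i)) \<le> 1"
    hence "S ** T0 \<in> F" by (simp add: F_def matrix_vector_mul_assoc)
    hence "\<bar>det S\<bar> * \<bar>det T0\<bar> \<le> 1 * \<bar>det T0\<bar>" using T0_max[of "S ** T0"] by (simp add: det_mul abs_mult)
    thus "\<bar>det S\<bar> \<le> 1" using det_T0 by simp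
  qed
  moreover have "invertible T0" using det_T0 by (simp add: invertible_det_nz)
  ultimately show ?thesis by blast
qed

lemma abs_entry_le_max_entry_norm: "\<bar>M $ i $ j\<bar> \<le> max_entry_norm M"
  unfolding max_entry_norm_def by (rule Max_ge) auto

lemma rank_factorization:
  fixes M :: "real^'q^'p"
  assumes "CARD('k) = rank M"
  shows "\<exists>(A :: real^'p^'k) (B :: real^'q^'k). M = transpose A ** B"
proof -
  have "subspace (range ((*v) M))"
    using linear_subspace_image[OF matrix_vector_mul_linear[of M] subspace_UNIV] by simp
  moreover have "dim (UNIV :: (real^'k) set) = dim (range ((*v) M))"
    using assms by (simp add: rank_dim_range)
  ultimately obtain f :: "real^'k \<Rightarrow> real^'p"
    where f: "linear f" "f ` UNIV = range ((*v) M)" "inj f"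
    using subspace_isomorphism[OF subspace_UNIV] by metis
  obtain g where g: "linear g" "g \<circ> f = id" using linear_injective_left_inverse[OF f(1,3)] by blast
  have lin: "linear (g \<circ> (*v) M)" using g(1) by (simp add: linear_compose)
  have "M *v x = (matrix f ** matrix (g \<circ> (*v) M)) *v x" for x
  proof -
    obtain y where y: "M *v x = f y" using f(2) by (metis rangeI image_iff)
    have "(matrix f ** matrix (g \<circ> (*v) M)) *v x = f (g (M *v x))"
      by (simp flip: matrix_vector_mul_assoc add: matrix_works lin f(1))
    also have "\<dots> = M *v x" using g(2) y by (metis comp_apply id_apply)
    finally show ?thesis by simp
  qed
  hence "M = transpose (transpose (matrix f)) ** matrix (g \<circ> (*v) M)"
    by (simp add: matrix_eq)
  thus ?thesis by blast
qed

lemma spanning_columns_of_full_rank: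
  fixes A :: "real^'p^'k"
  assumes "rank A = CARD('k)"
  shows "span (range (\<lambda>i. column i A)) = UNIV"
proof -
  have "range (\<lambda>i. column i A) = columns A" by (auto simp: columns_def)
  moreover have "dim (columns A) = CARD('k)" using assms by (simp add: column_rank_def)
  ultimately show ?thesis by (simp flip: dim_eq_full)
qed

lemma unit_left_factorization:
  fixes M :: "real^'q^'p"
  assumes "CARD('k) = rank M"
  shows "\<exists>(a :: 'p \<Rightarrow> real^'k) (b :: 'q \<Rightarrow> real^'k). (\<forall>i j. M $ i $ j = a i \<bullet> b j) \<and>
           (\<forall>i. norm (a i) \<le> 1) \<and> (\<forall>j. norm (b j) \<le> sqrt (CARD('k)) * max_entry_norm M)"
proof -
  obtain A0 :: "real^'p^'k" and B0 :: "real^'q^'k" where M: "M = transpose A0 ** B0"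
    using rank_factorization[OF assms] by blast
  have "rank M \<le> rank (transpose A0)" unfolding M by (rule rank_mul_le_left)
  hence "rank A0 = CARD('k)" using assms rank_bound[of A0] by (simp add: rank_transpose)
  then obtain T :: "real^'k^'k" where T: "invertible T"
    and pos: "min_ellipsoid_position (\<lambda>i. T *v column i A0)"
    using min_ellipsoid_position_exists spanning_columns_of_full_rank by blast
  obtain N where N: "N ** T = mat 1" using T unfolding invertible_def by blast
  define a where "a = (\<lambda>i. T *v column i A0)"
  define b where "b = (\<lambda>j. transpose N *v column j B0)"
  have entries: "M $ i $ j = a i \<bullet> b j" for i j
  proof -
    have "a i \<bullet> b j = (a i v* transpose N) \<bullet> column j B0" unfolding b_def by (rule dot_lmul_matrix[symmetric])
    also have "a i v* transpose N = column i A0" by (simp add: a_def matrix_vector_mul_assoc N)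
    finally show ?thesis
      by (simp add: M matrix_matrix_mult_def transpose_def column_def inner_vec_def)
  qed
  have "norm (b j) \<le> sqrt (CARD('k)) * max_entry_norm M" for j
  proof -
    obtain i where "norm (b j) \<le> sqrt (CARD('k)) * \<bar>a i \<bullet> b j\<bar>"
      using min_ellipsoid_position_norm_bound pos unfolding a_def by blast
    also have "\<dots> \<le> sqrt (CARD('k)) * max_entry_norm M"
      using abs_entry_le_max_entry_norm[of M i j] by (simp add: entries mult_left_mono)
    finally show ?thesis .
  qed
  moreover have "norm (a i) \<le> 1" for i using pos by (simp add: a_def min_ellipsoid_position_def)
  ultimately show ?thesis using entries by blast
qed

lemma balanced_factorization:
  fixes M :: "real^'q^'p" and a :: "'p \<Rightarrow> real^'k" and b :: "'q \<Rightarrow> real^'k"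
  assumes entries: "\<And>i j. M $ i $ j = a i \<bullet> b j"
    and a: "\<And>i. norm (a i) \<le> 1" and b: "\<And>j. norm (b j) \<le> \<rho>^2" and \<rho>: "\<rho> > 0"
  shows "\<exists>(A :: real^'p^'k) (B :: real^'q^'k). M = transpose A ** B \<and>
           (\<forall>i. norm (column i A) \<le> \<rho>) \<and> (\<forall>j. norm (column j B) \<le> \<rho>)"
proof (intro exI conjI allI)
  define A :: "real^'p^'k" where "A = (\<chi> r i. \<rho> * a i $ r)"
  define B :: "real^'q^'k" where "B = (\<chi> r j. b j $ r / \<rho>)"
  have "(transpose A ** B) $ i $ j = a i \<bullet> b j" for i j
    using \<rho> by (simp add: A_def B_def matrix_matrix_mult_def transpose_def inner_vec_def)
  thus "M = transpose A ** B" by (simp add: vec_eq_iff entries)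
  have "column i A = \<rho> *\<^sub>R a i" for i by (simp add: A_def column_def vec_eq_iff)
  thus "norm (column i A) \<le> \<rho>" for i using a[of i] \<rho> by (simp add: mult_left_le)
  have "column j B = (1 / \<rho>) *\<^sub>R b j" for j by (simp add: B_def column_def vec_eq_iff)
  hence "norm (column j B) = norm (b j) / \<rho>" for j using \<rho> by simp
  also have "norm (b j) / \<rho> \<le> \<rho>^2 / \<rho>" for j using b[of j] \<rho> by (simp add: divide_right_mono)
  finally show "norm (column j B) \<le> \<rho>" for j by (simp add: power2_eq_square)
qed

theorem corollary6p6:
  fixes M :: "real^'q^'p"
  assumes "rank M \<ge> 1"
    and "CARD('k) = rank M"
  shows "\<exists>(A :: real^'p^'k) (B :: real^'q^'k).
           M = transpose A ** B \<and>
           (\<forall>j. norm (column j A) \<le> real CARD('k) powr (1/4) * sqrt (max_entry_norm M)) \<and>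
           (\<forall>j. norm (column j B) \<le> real CARD('k) powr (1/4) * sqrt (max_entry_norm M))"
proof -
  define m where "m = max_entry_norm M"
  define n where "n = real CARD('k)"
  have n: "n \<ge> 1" by (simp add: n_def Suc_le_eq)
  have "M \<noteq> 0" using assms(1) rank_eq_0[of M] by auto
  then obtain i j where "M $ i $ j \<noteq> 0" by (metis vec_eq_iff zero_index)
  hence m: "m > 0" using abs_entry_le_max_entry_norm[of M i j] by (simp add: m_def)
  obtain a :: "'p \<Rightarrow> real^'k" and b :: "'q \<Rightarrow> real^'k"
    where "\<forall>i j. M $ i $ j = a i \<bullet> b j" "\<forall>i. norm (a i) \<le> 1" "\<forall>j. norm (b j) \<le> sqrt n * m"
    using unit_left_factorization[OF assms(2)] unfolding m_def n_def by blast
  moreover have "(n powr (1/4) * sqrt m)^2 = sqrt n * m"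
  proof -
    have "(n powr (1/4))^2 = n powr (1/2)" by (simp add: power2_eq_square flip: powr_add)
    thus ?thesis using n m by (simp add: power_mult_distrib powr_half_sqrt)
  qed
  moreover have "n powr (1/4) * sqrt m > 0" using n m by simp
  ultimately show ?thesis unfolding m_def n_def using balanced_factorization by metis
qed

end
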